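(* Let $A=[a_1,\dots,a_N]\in\mathbb{C}^{n\times N}$ be a random matrix with i.i.d. entries distributed as $N(0,1)+iN(0,1)$, let $x_0\in\mathbb{C}^n$ with $\|x_0\|=1$, and $b(j)=|a_j^*x_0|$. Let $I\subset\{1,\dots,N\}$ be such that $b(i)\le b(j)$ for all $i\in I$, $j\notin I$, with $|I|<N$. Define $\tau_*=-2\ln(1-|I|/N)$, $\hat I=\{i: b(i)^2\le\tau_*\}$, and let $\tau_1\le\tau_2\le\dots\le\tau_N$ be the values $b(1)^2,\dots,b(N)^2$ sorted in increasing order. Then: (i) For any $\delta>0$, $\tau_{|I|}\le\tau_*+\delta$ with probability at least \[ 1-\exp\left(-\frac N2\delta^2e^{-\delta}\left|1-|I|/N\right|^2\right). \] (ii) For each $\epsilon>0$, $|\hat I|\ge|I|(1-\epsilon)$, or equivalently $\tau_{\lfloor|I|(1-\epsilon)\rfloor}\le\tau_*$, with probability at least \[ 1-2\exp\left(-4\epsilon^2\left|1-|I|/N\right|^2|I|^2/N\right). \]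
   Context: $A^*$ denotes conjugate transpose. Under these assumptions each $b(i)^2$ has the distribution function $F(\tau)=1-\exp(-\tau/2)$, so that $F(\tau_* )=|I|/N$. *)

theory Defs
  imports "HOL-Probability.Probability"
begin

text \<open>Columns a_j of A are indexed by j < N (0-based), rows by k < n.
  b(j) = |a_j^* x0| = cmod (sum_k conj(A k j) * x0 k).\<close>
definition bval :: "nat \<Rightarrow> (nat \<Rightarrow> nat \<Rightarrow> 'a \<Rightarrow> complex) \<Rightarrow> (nat \<Rightarrow> complex) \<Rightarrow> nat \<Rightarrow> 'a \<Rightarrow> real" where
  "bval n A x0 j \<omega> = cmod (\<Sum>k<n. cnj (A k j \<omega>) * x0 k)"

text \<open>Order statistic, 1-indexed: ord_stat xs k is the k-th smallest entry of xs (k \<ge> 1).\<close>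
definition ord_stat :: "real list \<Rightarrow> nat \<Rightarrow> real" where
  "ord_stat xs k = sort xs ! (k - 1)"

definition tau :: "nat \<Rightarrow> nat \<Rightarrow> (nat \<Rightarrow> nat \<Rightarrow> 'a \<Rightarrow> complex) \<Rightarrow> (nat \<Rightarrow> complex) \<Rightarrow> nat \<Rightarrow> 'a \<Rightarrow> real" where
  "tau n N A x0 k \<omega> = ord_stat (map (\<lambda>j. (bval n A x0 j \<omega>)\<^sup>2) [0..<N]) k"

definition tau_star :: "nat \<Rightarrow> nat \<Rightarrow> real" where
  "tau_star m N = - 2 * ln (1 - real m / real N)"

definition Ihat :: "nat \<Rightarrow> nat \<Rightarrow> nat \<Rightarrow> (nat \<Rightarrow> nat \<Rightarrow> 'a \<Rightarrow> complex) \<Rightarrow> (nat \<Rightarrow> complex) \<Rightarrow> 'a \<Rightarrow> nat set" where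
  "Ihat n N m A x0 \<omega> = {i \<in> {..<N}. (bval n A x0 i \<omega>)\<^sup>2 \<le> tau_star m N}"

end

theory Submission
  imports Defs
begin

text \<open>Each \<open>b(j)\<^sup>2\<close> is the squared norm of a standard complex Gaussian: rotating every entry
  of the column \<open>a\<^sub>j\<close> by the phase of the corresponding entry of \<open>x\<^sub>0\<close> turns \<open>a\<^sub>j\<^sup>* x\<^sub>0\<close> into
  \<open>U - i V\<close> with \<open>U, V\<close> independent standard normals, so \<open>P(b(j)\<^sup>2 \<le> t) = 1 - exp (- t / 2)\<close>,
  and distinct columns are independent. Hence the number of \<open>j\<close> with \<open>b(j)\<^sup>2 \<le> c\<close> is
  binomial, and both claims are lower-tail Chernoff bounds for it: (i) with \<open>c = \<tau>\<^sub>* + \<delta>\<close>,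
  since \<open>\<tau>\<^bsub>|I|\<^esub> \<le> c\<close> iff at least \<open>|I|\<close> of the values are \<open>\<le> c\<close>, and (ii) with \<open>c = \<tau>\<^sub>*\<close>,
  where the success probability is exactly \<open>|I|/N\<close>. Only the cardinality \<open>m\<close> of \<open>I\<close> matters.\<close>

section \<open>A Chernoff bound for counts of independent events\<close>

lemma bernoulli_mgf_pos:
  fixes p :: real
  assumes "0 \<le> p" "p \<le> 1"
  shows "0 < 1 - p + p * exp x"
proof (cases "p = 1")
  case False
  with assms show ?thesis by (simp add: add_pos_nonneg)
qed simp

text \<open>The second derivative of the logarithm of the moment generating function is \<open>r (1 - r)\<close>,
  where \<open>r \<in> [0, p]\<close> is the success probability of the exponentially tilted Bernoulli law.\<close>

lemma ln_bernoulli_mgf_le: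
  fixes p V l :: real
  assumes p: "0 \<le> p" "p \<le> 1" and V: "\<And>r. 0 \<le> r \<Longrightarrow> r \<le> p \<Longrightarrow> r * (1 - r) \<le> V"
    and l: "0 \<le> l"
  shows "ln (1 - p + p * exp (- l)) \<le> - p * l + V * l\<^sup>2 / 2"
proof -
  define q where "q = (\<lambda>x::real. 1 - p + p * exp (- x))"
  define r where "r = (\<lambda>x. p * exp (- x) / q x)"
  have q_pos: "q x > 0" for x
    unfolding q_def using bernoulli_mgf_pos[OF p] .
  have r_range: "0 \<le> r x \<and> r x \<le> p" if "0 \<le> x" for x
  proof -
    have "p * exp (- x) \<le> p * exp (- x) + p * (1 - p) * (1 - exp (- x))"
      using p that by (intro add_increasing2) (auto intro!: mult_nonneg_nonneg)
    then have "p * exp (- x) \<le> p * q x" by (simp add: q_def algebra_simps)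
    then show ?thesis using q_pos[of x] p unfolding r_def
      by (auto simp: divide_le_eq intro!: divide_nonneg_pos)
  qed
  define g' where "g' = (\<lambda>x. - p + V * x + r x)"
  define g where "g = (\<lambda>x. - p * x + V * x\<^sup>2 / 2 - ln (q x))"
  have dr: "(r has_real_derivative (- r x * (1 - r x))) (at x)" for x
  proof -
    have "(r has_real_derivative
        (p * (- exp (- x)) * q x - p * exp (- x) * (p * (- exp (- x)))) / (q x)\<^sup>2) (at x)"
      unfolding r_def q_def using q_pos[of x, unfolded q_def]
      by (auto intro!: derivative_eq_intros simp: power2_eq_square)
    moreover have "(p * (- exp (- x)) * q x - p * exp (- x) * (p * (- exp (- x)))) / (q x)\<^sup>2
        = - r x * (1 - r x)"
      unfolding r_def using q_pos[of x] by (simp add: divide_simps power2_eq_square q_def)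
        (simp add: algebra_simps)
    ultimately show ?thesis by simp
  qed
  have dg': "(g' has_real_derivative (V - r x * (1 - r x))) (at x)" for x
    unfolding g'_def by (auto intro!: derivative_eq_intros dr)
  have dg: "(g has_real_derivative g' x) (at x)" for x
  proof -
    have "(g has_real_derivative (- p + V * x - (p * (- exp (- x))) / q x)) (at x)"
      unfolding g_def q_def using q_pos[of x, unfolded q_def] by (auto intro!: derivative_eq_intros)
    then show ?thesis by (simp add: g'_def r_def)
  qed
  have "g' 0 \<le> g' x" if "0 \<le> x" for x
    by (rule DERIV_nonneg_imp_nondecreasing[OF that]) (use dg' V r_range in force)
  moreover have "g' 0 = 0" unfolding g'_def r_def q_def by simp
  ultimately have "g 0 \<le> g l"
    by (intro DERIV_nonneg_imp_nondecreasing[OF l]) (use dg in force)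
  moreover have "g 0 = 0" unfolding g_def q_def by simp
  ultimately show ?thesis unfolding g_def q_def by simp
qed

lemma bernoulli_mgf_le:
  fixes p V l :: real
  assumes p: "0 \<le> p" "p \<le> 1" and V: "\<And>r. 0 \<le> r \<Longrightarrow> r \<le> p \<Longrightarrow> r * (1 - r) \<le> V"
    and l: "0 \<le> l"
  shows "1 - p * (1 - exp (- l)) \<le> exp (- p * l + V * l\<^sup>2 / 2)"
proof -
  have "1 - p * (1 - exp (- l)) = exp (ln (1 - p + p * exp (- l)))"
    using bernoulli_mgf_pos[OF p] by (simp add: algebra_simps)
  also have "\<dots> \<le> exp (- p * l + V * l\<^sup>2 / 2)"
    using ln_bernoulli_mgf_le[OF p V l] by simp
  finally show ?thesis .
qed

lemma (in prob_space) prob_ge_ge_one_minus_prob_le: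
  fixes f :: "'a \<Rightarrow> real"
  assumes f: "f \<in> borel_measurable M"
  shows "prob {\<omega> \<in> space M. a \<le> f \<omega>} \<ge> 1 - prob {\<omega> \<in> space M. f \<omega> \<le> a}"
proof -
  have "{\<omega> \<in> space M. a \<le> f \<omega>} = space M - {\<omega> \<in> space M. f \<omega> < a}"
    by auto
  then have "prob {\<omega> \<in> space M. a \<le> f \<omega>} = 1 - prob {\<omega> \<in> space M. f \<omega> < a}"
    using f by (simp add: prob_compl)
  moreover have "prob {\<omega> \<in> space M. f \<omega> < a} \<le> prob {\<omega> \<in> space M. f \<omega> \<le> a}"
    using f by (intro finite_measure_mono) auto
  ultimately show ?thesis by simp
qed

lemma (in prob_space) nn_integral_exp_bernoulli:
  assumes X: "random_variable borel X" and X01: "\<And>\<omega>. \<omega> \<in> space M \<Longrightarrow> X \<omega> \<in> {0, 1}"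
  shows "(\<integral>\<^sup>+\<omega>. ennreal (exp (- l * X \<omega>)) \<partial>M)
           = ennreal (1 - (1 - exp (- l)) * prob {\<omega> \<in> space M. X \<omega> = 1})"
proof -
  define E where "E = {\<omega> \<in> space M. X \<omega> = 1}"
  have E: "E \<in> events" unfolding E_def using X by measurable
  have "(\<integral>\<^sup>+\<omega>. ennreal (exp (- l * X \<omega>)) \<partial>M)
      = (\<integral>\<^sup>+\<omega>. ennreal (exp (- l)) * indicator E \<omega> + indicator (space M - E) \<omega> \<partial>M)"
    by (intro nn_integral_cong) (use X01 in \<open>auto simp: E_def indicator_def\<close>)
  also have "\<dots> = ennreal (exp (- l)) * emeasure M E + emeasure M (space M - E)"
    using E by (subst nn_integral_add) (auto simp: nn_integral_cmult)
  also have "\<dots> = ennreal (exp (- l) * prob E + (1 - prob E))"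
    using E by (simp add: emeasure_eq_measure prob_compl ennreal_mult[symmetric]
        ennreal_plus[symmetric] del: ennreal_plus)
  also have "exp (- l) * prob E + (1 - prob E) = 1 - (1 - exp (- l)) * prob E"
    by (simp add: algebra_simps)
  finally show ?thesis unfolding E_def .
qed

lemma (in prob_space) prob_sum_bernoulli_le:
  assumes fin: "finite J" and indep: "indep_vars (\<lambda>_. borel) X J"
    and X01: "\<And>j \<omega>. j \<in> J \<Longrightarrow> \<omega> \<in> space M \<Longrightarrow> X j \<omega> \<in> {0, 1}"
    and pX: "\<And>j. j \<in> J \<Longrightarrow> prob {\<omega> \<in> space M. X j \<omega> = 1} \<ge> p"
    and p: "0 \<le> p" "p \<le> 1" and l: "l > 0"
  shows "prob {\<omega> \<in> space M. (\<Sum>j\<in>J. X j \<omega>) \<le> a}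
           \<le> exp (l * a) * (1 - p * (1 - exp (- l))) ^ card J"
proof -
  have rv: "random_variable borel (X j)" if "j \<in> J" for j
    using indep that unfolding indep_vars_def by blast
  have c: "0 \<le> 1 - exp (- l)" using l by simp
  have nn: "0 \<le> 1 - p * (1 - exp (- l))"
    using p c mult_mono[of p 1 "1 - exp (- l)" 1] by simp
  have "emeasure M {\<omega> \<in> space M. (\<Sum>j\<in>J. X j \<omega>) \<le> a}
      \<le> ennreal (exp (l * a)) * (\<integral>\<^sup>+\<omega>. ennreal (exp (- l * (\<Sum>j\<in>J. X j \<omega>))) * indicator (space M) \<omega> \<partial>M)"
    by (rule Chernoff_ineq_nn_integral_le[OF l]) (auto intro!: borel_measurable_sum rv)
  also have "(\<integral>\<^sup>+\<omega>. ennreal (exp (- l * (\<Sum>j\<in>J. X j \<omega>))) * indicator (space M) \<omega> \<partial>M)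
      = (\<integral>\<^sup>+\<omega>. (\<Prod>j\<in>J. ennreal (exp (- l * X j \<omega>))) \<partial>M)"
    by (intro nn_integral_cong)
       (simp add: sum_distrib_left exp_sum fin prod_ennreal indicator_def)
  also have "\<dots> = (\<Prod>j\<in>J. \<integral>\<^sup>+\<omega>. ennreal (exp (- l * X j \<omega>)) \<partial>M)"
    by (intro indep_vars_nn_integral fin indep_vars_compose2[OF indep]) auto
  also have "\<dots> = (\<Prod>j\<in>J. ennreal (1 - (1 - exp (- l)) * prob {\<omega> \<in> space M. X j \<omega> = 1}))"
    by (intro prod.cong refl nn_integral_exp_bernoulli rv X01)
  also have "\<dots> \<le> (\<Prod>j\<in>J. ennreal (1 - p * (1 - exp (- l))))"
  proof (intro prod_mono_ennreal ennreal_leI)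
    fix j assume "j \<in> J"
    then show "1 - (1 - exp (- l)) * prob {\<omega> \<in> space M. X j \<omega> = 1} \<le> 1 - p * (1 - exp (- l))"
      using mult_right_mono[OF pX c] by (simp add: mult.commute)
  qed
  also have "\<dots> = ennreal ((1 - p * (1 - exp (- l))) ^ card J)"
    using nn by (simp add: ennreal_power)
  finally have "emeasure M {\<omega> \<in> space M. (\<Sum>j\<in>J. X j \<omega>) \<le> a}
      \<le> ennreal (exp (l * a)) * ennreal ((1 - p * (1 - exp (- l))) ^ card J)"
    by (simp add: mult_left_mono)
  also have "\<dots> = ennreal (exp (l * a) * (1 - p * (1 - exp (- l))) ^ card J)"
    using nn by (simp add: ennreal_mult)
  finally have "ennreal (prob {\<omega> \<in> space M. (\<Sum>j\<in>J. X j \<omega>) \<le> a})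
      \<le> ennreal (exp (l * a) * (1 - p * (1 - exp (- l))) ^ card J)"
    by (simp add: emeasure_eq_measure)
  then show ?thesis
    using nn by (simp add: ennreal_le_iff)
qed

lemma (in prob_space) prob_count_ge:
  fixes Z :: "'i \<Rightarrow> 'a \<Rightarrow> real"
  assumes fin: "finite J" and indep: "indep_vars (\<lambda>_. borel) Z J"
    and pZ: "\<And>j. j \<in> J \<Longrightarrow> prob {\<omega> \<in> space M. Z j \<omega> \<le> c} \<ge> p"
    and p: "0 \<le> p" "p \<le> 1"
    and V: "\<And>r. 0 \<le> r \<Longrightarrow> r \<le> p \<Longrightarrow> r * (1 - r) \<le> V"
    and l: "0 < l"
  shows "prob {\<omega> \<in> space M. a \<le> real (card {j \<in> J. Z j \<omega> \<le> c})}
           \<ge> 1 - exp (l * a + real (card J) * (- p * l + V * l\<^sup>2 / 2))"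
proof -
  define X where "X = (\<lambda>j \<omega>. if Z j \<omega> \<le> c then 1 else (0::real))"
  have indX: "indep_vars (\<lambda>_. borel) X J"
    unfolding X_def by (rule indep_vars_compose2[OF indep]) auto
  have count: "(\<Sum>j\<in>J. X j \<omega>) = real (card {j \<in> J. Z j \<omega> \<le> c})" for \<omega>
    unfolding X_def using fin by (simp add: sum.If_cases Int_def conj_commute)
  have "prob {\<omega> \<in> space M. (\<Sum>j\<in>J. X j \<omega>) \<le> a}
      \<le> exp (l * a) * (1 - p * (1 - exp (- l))) ^ card J"
  proof (rule prob_sum_bernoulli_le[OF fin indX _ _ p l])
    fix j assume "j \<in> J"
    moreover have "{\<omega> \<in> space M. X j \<omega> = 1} = {\<omega> \<in> space M. Z j \<omega> \<le> c}"
      by (auto simp: X_def)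
    ultimately show "p \<le> prob {\<omega> \<in> space M. X j \<omega> = 1}" using pZ by simp
  qed (auto simp: X_def)
  also have "\<dots> \<le> exp (l * a) * exp (- p * l + V * l\<^sup>2 / 2) ^ card J"
    using bernoulli_mgf_le[OF p V] bernoulli_mgf_pos[OF p, of "- l"] l
    by (intro mult_left_mono power_mono) (simp_all add: algebra_simps)
  also have "\<dots> = exp (l * a + real (card J) * (- p * l + V * l\<^sup>2 / 2))"
    by (simp add: exp_of_nat_mult[symmetric] exp_add)
  moreover have "prob {\<omega> \<in> space M. a \<le> (\<Sum>j\<in>J. X j \<omega>)}
      \<ge> 1 - prob {\<omega> \<in> space M. (\<Sum>j\<in>J. X j \<omega>) \<le> a}"
    by (rule prob_ge_ge_one_minus_prob_le)
      (use indX in \<open>auto simp: indep_vars_def intro!: borel_measurable_sum\<close>)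
  ultimately show ?thesis unfolding count by simp
qed

section \<open>Order statistics\<close>

lemma sorted_nth_le_iff_length_filter:
  fixes ys :: "'a :: linorder list"
  assumes s: "sorted ys" and m: "1 \<le> m" "m \<le> length ys"
  shows "ys ! (m - 1) \<le> c \<longleftrightarrow> m \<le> length (filter (\<lambda>x. x \<le> c) ys)"
proof
  assume le: "ys ! (m - 1) \<le> c"
  have "{..<m} \<subseteq> {i. i < length ys \<and> ys ! i \<le> c}"
  proof
    fix i assume "i \<in> {..<m}"
    then have i: "i \<le> m - 1" "i < length ys" using m by auto
    have "ys ! i \<le> ys ! (m - 1)" by (rule sorted_nth_mono[OF s i(1)]) (use m in auto)
    then show "i \<in> {i. i < length ys \<and> ys ! i \<le> c}" using i le by auto
  qed
  then have "card {..<m} \<le> card {i. i < length ys \<and> ys ! i \<le> c}"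
    by (rule card_mono[rotated]) auto
  then show "m \<le> length (filter (\<lambda>x. x \<le> c) ys)"
    by (simp add: length_filter_conv_card)
next
  assume ge: "m \<le> length (filter (\<lambda>x. x \<le> c) ys)"
  show "ys ! (m - 1) \<le> c"
  proof (rule ccontr)
    assume "\<not> ys ! (m - 1) \<le> c"
    then have gt: "ys ! (m - 1) > c" by simp
    have "{i. i < length ys \<and> ys ! i \<le> c} \<subseteq> {..<m - 1}"
    proof
      fix i assume i: "i \<in> {i. i < length ys \<and> ys ! i \<le> c}"
      show "i \<in> {..<m - 1}"
      proof (rule ccontr)
        assume "i \<notin> {..<m - 1}"
        then have "m - 1 \<le> i" by simp
        then have "ys ! (m - 1) \<le> ys ! i" using i by (intro sorted_nth_mono[OF s]) auto
        then show False using i gt by (auto dest: order.trans)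
      qed
    qed
    then have "card {i. i < length ys \<and> ys ! i \<le> c} \<le> card {..<m - 1}"
      by (rule card_mono[rotated]) auto
    then show False using ge m by (simp add: length_filter_conv_card)
  qed
qed

lemma ord_stat_le_iff:
  fixes f :: "nat \<Rightarrow> real"
  assumes m: "1 \<le> m" "m \<le> N"
  shows "ord_stat (map f [0..<N]) m \<le> c \<longleftrightarrow> m \<le> card {j \<in> {..<N}. f j \<le> c}"
proof -
  have "ord_stat (map f [0..<N]) m \<le> c \<longleftrightarrow> m \<le> length (filter (\<lambda>x. x \<le> c) (sort (map f [0..<N])))"
    unfolding ord_stat_def by (rule sorted_nth_le_iff_length_filter) (use m in auto)
  also have "length (filter (\<lambda>x. x \<le> c) (sort (map f [0..<N]))) = card {j \<in> {..<N}. f j \<le> c}"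
    by (auto simp: filter_sort length_filter_conv_card intro!: arg_cong[where f = card])
  finally show ?thesis .
qed

lemma (in prob_space) indep_vars_block_functions:
  assumes indep: "indep_vars M' F I"
    and disj: "disjoint_family_on B J" and sub: "\<And>j. j \<in> J \<Longrightarrow> B j \<subseteq> I"
    and g: "\<And>j. j \<in> J \<Longrightarrow> g j \<in> measurable (PiM (B j) M') (N j)"
  shows "indep_vars N (\<lambda>j \<omega>. g j (\<lambda>i\<in>B j. F i \<omega>)) J"
  using indep_vars_compose2[OF indep_vars_restrict[OF indep sub disj] g] .

lemma (in prob_space) indep_vars_reindex:
  assumes indep: "indep_vars (\<lambda>_. N) X I" and inj: "inj_on h K" and sub: "h ` K \<subseteq> I"
  shows "indep_vars (\<lambda>_. N) (\<lambda>k. X (h k)) K"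
proof -
  have "indep_vars (\<lambda>_. N) (\<lambda>k \<omega>. (\<lambda>f. f (h k)) (\<lambda>i\<in>{h k}. X i \<omega>)) K"
    by (rule indep_vars_block_functions[OF indep])
      (use sub inj in \<open>auto simp: disjoint_family_on_def inj_on_def intro: measurable_component_singleton\<close>)
  then show ?thesis by simp
qed

lemma (in prob_space) indep_vars_indep_var:
  assumes indep: "indep_vars (\<lambda>_. N) X I" and "i \<in> I" "j \<in> I" "i \<noteq> j"
  shows "indep_var N (X i) N (X j)"
proof -
  have "indep_vars (\<lambda>_. N) (\<lambda>b. X (if b then i else j)) UNIV"
    by (rule indep_vars_reindex[OF indep]) (use assms in \<open>auto simp: inj_on_def\<close>)
  then show ?thesis unfolding indep_var_def
    by (rule indep_vars_cong[THEN iffD1, rotated -1]) (auto split: bool.split)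
qed

lemma (in prob_space) indep_vars_pair_components:
  fixes G :: "'k \<Rightarrow> 'a \<Rightarrow> real \<times> real"
  assumes fin: "finite K" and ne: "K \<noteq> {}" and indep: "indep_vars (\<lambda>_. borel \<Otimes>\<^sub>M borel) G K"
    and pair: "\<And>k. k \<in> K \<Longrightarrow> indep_var borel (\<lambda>\<omega>. fst (G k \<omega>)) borel (\<lambda>\<omega>. snd (G k \<omega>))"
  shows "indep_vars (\<lambda>_. borel) (\<lambda>(k, r) \<omega>. if r then fst (G k \<omega>) else snd (G k \<omega>)) (K \<times> UNIV)"
proof -
  define F where "F = (\<lambda>(k, r) \<omega>. if r then fst (G k \<omega>) else snd (G k \<omega>))"
  have F: "random_variable borel (F i)" if i: "i \<in> K \<times> UNIV" for i
  proof -
    obtain k r where i: "i = (k, r)" "k \<in> K" using i by (cases i) auto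
    have [measurable]: "G k \<in> measurable M (borel \<Otimes>\<^sub>M borel)"
      using indep i unfolding indep_vars_def by blast
    show ?thesis unfolding i F_def by simp measurable
  qed
  have "indep_vars (\<lambda>_. borel) F (K \<times> UNIV) \<longleftrightarrow> (\<forall>A\<in>(\<Pi> i\<in>K \<times> UNIV. sets borel).
      prob (\<Inter>j\<in>K \<times> UNIV. F j -` A j \<inter> space M) = (\<Prod>j\<in>K \<times> UNIV. prob (F j -` A j \<inter> space M)))"
    by (rule indep_vars_finite)
      (use fin ne F in \<open>auto simp: sets.Int_stable sets.sigma_sets_eq[where M = borel, simplified]\<close>)
  also have "\<dots>"
  proof
    fix A :: "'k \<times> bool \<Rightarrow> real set" assume A: "A \<in> (\<Pi> i\<in>K \<times> UNIV. sets borel)"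
    let ?E = "\<lambda>j. F j -` A j \<inter> space M"
    define B where "B = (\<lambda>k. A (k, True) \<times> A (k, False))"
    have "(\<Inter>j\<in>K \<times> UNIV. ?E j) = (\<Inter>k\<in>K. G k -` B k \<inter> space M)"
      using ne by (auto simp: F_def B_def mem_Times_iff) (metis (full_types))+
    then have "prob (\<Inter>j\<in>K \<times> UNIV. ?E j) = prob (\<Inter>k\<in>K. G k -` B k \<inter> space M)"
      by simp
    also have "\<dots> = (\<Prod>k\<in>K. prob (G k -` B k \<inter> space M))"
      by (rule indep_varsD[OF indep ne fin]) (use A in \<open>auto simp: B_def intro: pair_measureI\<close>)
    also have "\<dots> = (\<Prod>k\<in>K. prob (?E (k, True)) * prob (?E (k, False)))"
    proof (intro prod.cong refl)
      fix k assume k: "k \<in> K"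
      have "A (k, True) \<in> sets borel" "A (k, False) \<in> sets borel"
        using A k by auto
      moreover have "G k -` B k \<inter> space M
          = (\<lambda>\<omega>. (fst (G k \<omega>), snd (G k \<omega>))) -` (A (k, True) \<times> A (k, False)) \<inter> space M"
        by (simp add: B_def)
      ultimately show "prob (G k -` B k \<inter> space M) = prob (?E (k, True)) * prob (?E (k, False))"
        using indep_varD[OF pair[OF k]] by (simp add: F_def)
    qed
    also have "\<dots> = (\<Prod>k\<in>K. \<Prod>r\<in>UNIV. prob (?E (k, r)))"
      by (simp add: UNIV_bool mult.commute)
    also have "\<dots> = (\<Prod>j\<in>K \<times> UNIV. prob (?E j))"
      by (subst prod.cartesian_product) (simp add: case_prod_beta')
    finally show "prob (\<Inter>j\<in>K \<times> UNIV. ?E j) = (\<Prod>j\<in>K \<times> UNIV. prob (?E j))" .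
  qed
  finally show ?thesis unfolding F_def .
qed

section \<open>Pairs of independent standard normals\<close>

lemma (in prob_space) indep_var_lborel_iff:
  "indep_var lborel U lborel V \<longleftrightarrow> indep_var borel U borel (V :: 'a \<Rightarrow> real)"
  unfolding indep_var_def indep_vars_def by (simp add: case_bool_if if_distrib cong: if_cong)

lemma (in prob_space) distr_pair_snd_self: "distr (M \<Otimes>\<^sub>M M) M snd = M"
proof (intro measure_eqI)
  fix A assume A: "A \<in> sets (distr (M \<Otimes>\<^sub>M M) M snd)"
  from A have "emeasure (distr (M \<Otimes>\<^sub>M M) M snd) A = emeasure (M \<Otimes>\<^sub>M M) (space M \<times> A)"
    by (auto simp add: emeasure_distr space_pair_measure dest: sets.sets_into_space
        intro!: arg_cong2[where f = emeasure])
  with A show "emeasure (distr (M \<Otimes>\<^sub>M M) M snd) A = emeasure M A"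
    by (simp add: emeasure_pair_measure_Times emeasure_space_1)
qed simp

lemma (in prob_space) std_normal_pair_iff_joint_distr:
  fixes P Q :: "'a \<Rightarrow> real"
  assumes P: "P \<in> borel_measurable M" and Q: "Q \<in> borel_measurable M"
  shows "indep_var borel P borel Q \<and> distributed M lborel P std_normal_density
           \<and> distributed M lborel Q std_normal_density
         \<longleftrightarrow> distr M (lborel \<Otimes>\<^sub>M lborel) (\<lambda>\<omega>. (P \<omega>, Q \<omega>))
           = std_normal_distribution \<Otimes>\<^sub>M std_normal_distribution"
  (is "_ \<longleftrightarrow> ?joint = ?N \<Otimes>\<^sub>M ?N")
proof -
  interpret N: prob_space ?N by (rule prob_space_normal_density) simp
  have marginals: "distr M lborel P = ?N" "distr M lborel Q = ?N" if joint: "?joint = ?N \<Otimes>\<^sub>M ?N"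
  proof -
    have PQ: "(\<lambda>\<omega>. (P \<omega>, Q \<omega>)) \<in> measurable M (lborel \<Otimes>\<^sub>M lborel)" using P Q by measurable
    have "distr M lborel P = distr ?joint lborel fst"
      using PQ by (subst distr_distr) (auto simp: o_def)
    also have "\<dots> = ?N"
      unfolding joint by (subst distr_cong[of _ _ _ ?N]) (auto intro: N.distr_pair_fst)
    finally show "distr M lborel P = ?N" .
    have "distr M lborel Q = distr ?joint lborel snd"
      using PQ by (subst distr_distr) (auto simp: o_def)
    also have "\<dots> = ?N"
      unfolding joint by (subst distr_cong[of _ _ _ ?N]) (auto intro: N.distr_pair_snd_self)
    finally show "distr M lborel Q = ?N" .
  qed
  show ?thesis
    using P Q marginals indep_var_distribution_eq[of lborel P lborel Q]
    by (auto simp: indep_var_lborel_iff distributed_def)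
qed

lemma std_normal_density_mult:
  "std_normal_density x * std_normal_density y = exp (- (x\<^sup>2 + y\<^sup>2) / 2) / (2 * pi)"
proof -
  have "sqrt (2 * pi) * sqrt (2 * pi) = 2 * pi" by simp
  then show ?thesis unfolding std_normal_density_def
    by (simp add: exp_add[symmetric] add_divide_distrib)
qed

lemma std_normal_distribution_pair:
  "std_normal_distribution \<Otimes>\<^sub>M std_normal_distribution
     = density (lborel \<Otimes>\<^sub>M lborel) (\<lambda>(x, y). ennreal (exp (- (x\<^sup>2 + y\<^sup>2) / 2) / (2 * pi)))"
proof -
  interpret N: prob_space std_normal_distribution by (rule prob_space_normal_density) simp
  have "std_normal_distribution \<Otimes>\<^sub>M std_normal_distribution = density (lborel \<Otimes>\<^sub>M lborel)
      (\<lambda>(x, y). ennreal (std_normal_density x) * ennreal (std_normal_density y))"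
    using N.sigma_finite_measure_axioms lborel.sigma_finite_measure_axioms
    by (intro pair_measure_density) (auto simp del: zero_less_one intro: zero_less_one)
  also have "(\<lambda>(x, y). ennreal (std_normal_density x) * ennreal (std_normal_density y))
      = (\<lambda>(x, y). ennreal (exp (- (x\<^sup>2 + y\<^sup>2) / 2) / (2 * pi)))"
    by (auto simp: fun_eq_iff std_normal_density_mult ennreal_mult[symmetric])
  finally show ?thesis .
qed

section \<open>The squared norm of a standard Gaussian vector in the plane\<close>

lemma nn_integral_lborel_even:
  fixes f :: "real \<Rightarrow> ennreal"
  assumes [measurable]: "f \<in> borel_measurable borel" and ev: "\<And>x. f (-x) = f x"
  shows "(\<integral>\<^sup>+x. f x \<partial>lborel) = 2 * (\<integral>\<^sup>+x. f x * indicator {0<..} x \<partial>lborel)"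
proof -
  have "(\<integral>\<^sup>+x. f x \<partial>lborel) = (\<integral>\<^sup>+x. f x * indicator {0<..} x + f x * indicator {..<0} x \<partial>lborel)"
    by (intro nn_integral_cong_AE eventually_mono[OF AE_lborel_singleton[of 0]])
       (auto simp: indicator_def)
  also have "\<dots> = (\<integral>\<^sup>+x. f x * indicator {0<..} x \<partial>lborel)
      + (\<integral>\<^sup>+x. f x * indicator {..<0} x \<partial>lborel)"
    by (rule nn_integral_add) auto
  also have "(\<integral>\<^sup>+x. f x * indicator {..<0} x \<partial>lborel)
      = (\<integral>\<^sup>+x. f (0 + (-1) * x) * indicator {..<0} (0 + (-1) * x) \<partial>lborel)"
    by (subst nn_integral_real_affine[where c="-1" and t=0]) auto
  also have "\<dots> = (\<integral>\<^sup>+x. f x * indicator {0<..} x \<partial>lborel)"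
    by (intro nn_integral_cong) (auto simp: ev indicator_def)
  finally show ?thesis
    by (simp add: mult_2)
qed

definition std_normal_disc :: "real \<Rightarrow> real \<Rightarrow> real \<Rightarrow> real" where
  "std_normal_disc t u v = exp (- (u\<^sup>2 + v\<^sup>2) / 2) / (2 * pi) * (if u\<^sup>2 + v\<^sup>2 \<le> t then 1 else 0)"

lemma std_normal_disc_measurable[measurable]:
  "(\<lambda>(u, v). std_normal_disc t u v) \<in> borel_measurable (borel \<Otimes>\<^sub>M borel)"
  unfolding std_normal_disc_def by measurable

lemma nn_integral_std_normal_disc_ray:
  fixes a t :: real
  assumes t: "0 \<le> t" and a: "0 < a"
  shows "(\<integral>\<^sup>+u. ennreal (u * exp (- (u\<^sup>2 * a) / 2) / (2 * pi) * (if u\<^sup>2 * a \<le> t then 1 else 0))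
            * indicator {0<..} u \<partial>lborel)
        = ennreal ((1 - exp (- t / 2)) / (2 * pi * a))"
proof -
  define b where "b = sqrt (t / a)"
  have b: "0 \<le> b" "b\<^sup>2 * a = t" unfolding b_def using a t by simp_all
  have le_iff: "u\<^sup>2 * a \<le> t \<longleftrightarrow> u \<le> b" if "0 \<le> u" for u
  proof -
    have "u\<^sup>2 * a \<le> t \<longleftrightarrow> u\<^sup>2 \<le> b\<^sup>2" using a by (simp add: mult_le_cancel_right flip: b(2))
    also have "\<dots> \<longleftrightarrow> u \<le> b" using that b by (simp add: power2_le_iff_abs_le)
    finally show ?thesis .
  qed
  define f where "f = (\<lambda>u. u * exp (- (u\<^sup>2 * a) / 2) / (2 * pi))"
  define F where "F = (\<lambda>u. - exp (- (u\<^sup>2 * a) / 2) / (2 * pi * a))"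
  have "(\<integral>\<^sup>+u. ennreal (u * exp (- (u\<^sup>2 * a) / 2) / (2 * pi) * (if u\<^sup>2 * a \<le> t then 1 else 0))
            * indicator {0<..} u \<partial>lborel)
      = (\<integral>\<^sup>+u. ennreal (f u) * indicator {0..b} u \<partial>lborel)"
    by (intro nn_integral_cong) (auto simp: f_def indicator_def le_iff less_le)
  also have "\<dots> = F b - F 0"
  proof (rule nn_integral_FTC_Icc)
    show "f \<in> borel_measurable borel" unfolding f_def by measurable
    fix x assume "x \<in> {0..b}"
    then show "(F has_real_derivative f x) (at x)" "0 \<le> f x"
      unfolding F_def f_def using a by (auto intro!: derivative_eq_intros simp: field_simps)
  qed (use b in auto)
  also have "F b - F 0 = (1 - exp (- t / 2)) / (2 * pi * a)"
    unfolding F_def using a b by (simp add: field_simps)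
  finally show ?thesis .
qed

lemma nn_integral_inverse_one_plus_square:
  "(\<integral>\<^sup>+s. ennreal (1 / (1 + s\<^sup>2)) * indicator {0<..} s \<partial>lborel) = ennreal (pi / 2)"
proof -
  have "(\<integral>\<^sup>+s. ennreal (1 / (1 + s\<^sup>2)) * indicator {0<..} s \<partial>lborel)
      = (\<integral>\<^sup>+s. ennreal (1 / (1 + s\<^sup>2)) * indicator {0..} s \<partial>lborel)"
    by (intro nn_integral_cong_AE eventually_mono[OF AE_lborel_singleton[of 0]])
       (auto simp: indicator_def)
  also have "\<dots> = ennreal (pi / 2 - arctan 0)"
  proof (rule nn_integral_FTC_atLeast)
    show "(arctan \<longlongrightarrow> pi / 2) at_top"
      by (rule tendsto_arctan_at_top)
  qed (auto intro!: derivative_eq_intros simp: add_nonneg_eq_0_iff field_simps power2_eq_square)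
  finally show ?thesis by simp
qed

text \<open>Substituting \<open>v = u s\<close> makes the inner integral elementary in \<open>u\<close>; what remains is the
  integral of \<open>1 / (1 + s\<^sup>2)\<close>.\<close>

lemma nn_integral_std_normal_disc_quadrant:
  assumes t: "0 \<le> t"
  shows "(\<integral>\<^sup>+u. (\<integral>\<^sup>+v. ennreal (std_normal_disc t u v) * indicator {0<..} v \<partial>lborel)
            * indicator {0<..} u \<partial>lborel)
         = ennreal ((1 - exp (- t / 2)) / 4)"
proof -
  define K where "K = (\<lambda>u s. u * exp (- (u\<^sup>2 * (1 + s\<^sup>2)) / 2) / (2 * pi)
    * (if u\<^sup>2 * (1 + s\<^sup>2) \<le> t then 1 else 0))"
  have [measurable]: "(\<lambda>(u, s). K u s) \<in> borel_measurable (borel \<Otimes>\<^sub>M borel)"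
    unfolding K_def by measurable
  have substitute: "(\<integral>\<^sup>+v. ennreal (std_normal_disc t u v) * indicator {0<..} v \<partial>lborel) * indicator {0<..} u
      = (\<integral>\<^sup>+s. ennreal (K u s) * indicator {0<..} u * indicator {0<..} s \<partial>lborel)" for u
  proof (cases "u > 0")
    case True
    have "(\<integral>\<^sup>+v. ennreal (std_normal_disc t u v) * indicator {0<..} v \<partial>lborel)
        = ennreal \<bar>u\<bar>
          * (\<integral>\<^sup>+s. ennreal (std_normal_disc t u (0 + u * s)) * indicator {0<..} (0 + u * s) \<partial>lborel)"
      by (rule nn_integral_real_affine) (use True in auto)
    also have "\<dots> = (\<integral>\<^sup>+s. ennreal (K u s) * indicator {0<..} s \<partial>lborel)"
      using True
      by (subst nn_integral_cmult[symmetric])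
         (auto intro!: nn_integral_cong simp: K_def std_normal_disc_def indicator_def zero_less_mult_iff
               ennreal_mult[symmetric] power_mult_distrib algebra_simps)
    finally show ?thesis using True by simp
  qed (simp add: indicator_def)
  have ray: "(\<integral>\<^sup>+u. ennreal (K u s) * indicator {0<..} u * indicator {0<..} s \<partial>lborel)
      = ennreal ((1 - exp (- t / 2)) / (2 * pi)) * (ennreal (1 / (1 + s\<^sup>2)) * indicator {0<..} s)" for s
  proof (cases "s > 0")
    case True
    have "(\<integral>\<^sup>+u. ennreal (K u s) * indicator {0<..} u \<partial>lborel)
        = ennreal ((1 - exp (- t / 2)) / (2 * pi * (1 + s\<^sup>2)))"
      unfolding K_def by (rule nn_integral_std_normal_disc_ray) (use t in \<open>auto simp: add_pos_nonneg\<close>)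
    also have "\<dots> = ennreal ((1 - exp (- t / 2)) / (2 * pi)) * ennreal (1 / (1 + s\<^sup>2))"
      using t by (subst ennreal_mult[symmetric]) (auto simp: add_pos_nonneg)
    finally show ?thesis using True by simp
  qed simp
  have "(\<integral>\<^sup>+u. (\<integral>\<^sup>+v. ennreal (std_normal_disc t u v) * indicator {0<..} v \<partial>lborel)
            * indicator {0<..} u \<partial>lborel)
      = (\<integral>\<^sup>+u. \<integral>\<^sup>+s. ennreal (K u s) * indicator {0<..} u * indicator {0<..} s \<partial>lborel \<partial>lborel)"
    by (simp add: substitute)
  also have "\<dots> = (\<integral>\<^sup>+s. \<integral>\<^sup>+u. ennreal (K u s) * indicator {0<..} u * indicator {0<..} s \<partial>lborel \<partial>lborel)"
    by (rule lborel_pair.Fubini'[symmetric]) measurable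
  also have "\<dots> = ennreal ((1 - exp (- t / 2)) / (2 * pi)) * ennreal (pi / 2)"
    by (simp add: ray nn_integral_cmult nn_integral_inverse_one_plus_square)
  also have "\<dots> = ennreal ((1 - exp (- t / 2)) / 4)"
    using t by (simp add: ennreal_mult[symmetric])
  finally show ?thesis .
qed

lemma nn_integral_std_normal_disc:
  assumes t: "0 \<le> t"
  shows "(\<integral>\<^sup>+u. \<integral>\<^sup>+v. ennreal (std_normal_disc t u v) \<partial>lborel \<partial>lborel) = ennreal (1 - exp (- t / 2))"
proof -
  define J where "J = (\<lambda>u. \<integral>\<^sup>+v. ennreal (std_normal_disc t u v) * indicator {0<..} v \<partial>lborel)"
  have [measurable]: "J \<in> borel_measurable borel"
    unfolding J_def by measurable
  have "(\<integral>\<^sup>+u. \<integral>\<^sup>+v. ennreal (std_normal_disc t u v) \<partial>lborel \<partial>lborel) = (\<integral>\<^sup>+u. 2 * J u \<partial>lborel)"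
    unfolding J_def by (subst nn_integral_lborel_even) (auto simp: std_normal_disc_def)
  also have "\<dots> = 2 * (2 * (\<integral>\<^sup>+u. J u * indicator {0<..} u \<partial>lborel))"
    by (subst nn_integral_cmult) (auto simp: nn_integral_lborel_even J_def std_normal_disc_def)
  also have "\<dots> = ennreal (1 - exp (- t / 2))"
    using nn_integral_std_normal_disc_quadrant[OF t] t
    by (simp add: J_def ennreal_mult[symmetric] flip: ennreal_numeral)
  finally show ?thesis .
qed

lemma (in prob_space) prob_sum_sq_std_normal_le:
  fixes U V :: "'a \<Rightarrow> real"
  assumes ind: "indep_var borel U borel V"
    and U: "distributed M lborel U std_normal_density"
    and V: "distributed M lborel V std_normal_density"
    and t: "0 \<le> t"
  shows "prob {\<omega> \<in> space M. (U \<omega>)\<^sup>2 + (V \<omega>)\<^sup>2 \<le> t} = 1 - exp (- t / 2)"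
proof -
  let ?L = "lborel \<Otimes>\<^sub>M lborel :: (real \<times> real) measure"
  define g where "g = (\<lambda>(x, y). ennreal (exp (- (x\<^sup>2 + y\<^sup>2) / 2) / (2 * pi)))"
  define S where "S = {z :: real \<times> real. (fst z)\<^sup>2 + (snd z)\<^sup>2 \<le> t}"
  have [measurable]: "U \<in> borel_measurable M" "V \<in> borel_measurable M"
    using U V by (auto dest: distributed_measurable)
  have [measurable]: "g \<in> borel_measurable ?L" unfolding g_def by measurable
  have "{z \<in> space (borel \<Otimes>\<^sub>M borel). (fst z)\<^sup>2 + (snd z :: real)\<^sup>2 \<le> t} \<in> sets (borel \<Otimes>\<^sub>M borel)"
    by measurable
  then have S [measurable]: "S \<in> sets ?L" unfolding S_def by (simp add: space_pair_measure)
  have joint: "distr M ?L (\<lambda>\<omega>. (U \<omega>, V \<omega>)) = density ?L g"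
    using std_normal_pair_iff_joint_distr[of U V] ind U V by (simp add: std_normal_distribution_pair g_def)
  have "emeasure M {\<omega> \<in> space M. (U \<omega>)\<^sup>2 + (V \<omega>)\<^sup>2 \<le> t} = emeasure (distr M ?L (\<lambda>\<omega>. (U \<omega>, V \<omega>))) S"
    using S by (subst emeasure_distr) (auto simp: S_def intro!: arg_cong[where f = "emeasure M"])
  also have "\<dots> = (\<integral>\<^sup>+z. g z * indicator S z \<partial>?L)"
    unfolding joint by (rule emeasure_density[OF _ S]) measurable
  also have "\<dots> = (\<integral>\<^sup>+u. \<integral>\<^sup>+v. g (u, v) * indicator S (u, v) \<partial>lborel \<partial>lborel)"
    by (rule lborel.nn_integral_fst[symmetric]) measurable
  also have "\<dots> = (\<integral>\<^sup>+u. \<integral>\<^sup>+v. ennreal (std_normal_disc t u v) \<partial>lborel \<partial>lborel)"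
    by (intro nn_integral_cong) (auto simp: g_def S_def std_normal_disc_def indicator_def)
  also have "\<dots> = ennreal (1 - exp (- t / 2))"
    by (rule nn_integral_std_normal_disc[OF t])
  finally show ?thesis
    using t by (simp add: emeasure_eq_measure)
qed

section \<open>Rotation invariance of the standard Gaussian in the plane\<close>

lemma emeasure_lborel_translate:
  assumes B: "B \<in> sets borel"
  shows "emeasure lborel ((\<lambda>x::real. c + x) -` B) = emeasure lborel B"
proof -
  have "emeasure lborel B = emeasure (distr lborel borel ((+) c)) B"
    by (simp add: lborel_distr_plus)
  also have "\<dots> = emeasure lborel (((+) c) -` B \<inter> space lborel)"
    using B by (subst emeasure_distr) auto
  finally show ?thesis by simp
qed

lemma distr_shear_fst_lborel_pair:
  "distr (lborel \<Otimes>\<^sub>M lborel) (lborel \<Otimes>\<^sub>M lborel) (\<lambda>(x,y). (x + a * y, y :: real)) = lborel \<Otimes>\<^sub>M lborel"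
  (is "distr ?L ?L ?T = ?L")
proof (rule measure_eqI)
  fix A assume "A \<in> sets (distr ?L ?L ?T)"
  then have A: "A \<in> sets ?L" by simp
  have Tm: "?T \<in> measurable ?L ?L" by measurable
  have A': "?T -` A \<inter> space ?L \<in> sets ?L" using Tm A by measurable
  have "emeasure (distr ?L ?L ?T) A = emeasure ?L (?T -` A \<inter> space ?L)"
    by (rule emeasure_distr[OF Tm A])
  also have "\<dots> = (\<integral>\<^sup>+y. emeasure lborel ((\<lambda>x. (x, y)) -` (?T -` A \<inter> space ?L)) \<partial>lborel)"
    by (rule lborel_pair.emeasure_pair_measure_alt2[OF A'])
  also have "\<dots> = (\<integral>\<^sup>+y. emeasure lborel ((\<lambda>x. (x, y)) -` A) \<partial>lborel)"
  proof (intro nn_integral_cong)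
    fix y :: real
    have "(\<lambda>x. (x, y)) -` (?T -` A \<inter> space ?L) = (\<lambda>x. a * y + x) -` ((\<lambda>x. (x, y)) -` A)"
      by (auto simp: space_pair_measure algebra_simps)
    then show "emeasure lborel ((\<lambda>x. (x, y)) -` (?T -` A \<inter> space ?L))
        = emeasure lborel ((\<lambda>x. (x, y)) -` A)"
      using sets_Pair2[OF A] by (simp add: emeasure_lborel_translate)
  qed
  also have "\<dots> = emeasure ?L A"
    by (rule lborel_pair.emeasure_pair_measure_alt2[OF A, symmetric])
  finally show "emeasure (distr ?L ?L ?T) A = emeasure ?L A" .
qed simp

lemma distr_shear_snd_lborel_pair:
  "distr (lborel \<Otimes>\<^sub>M lborel) (lborel \<Otimes>\<^sub>M lborel) (\<lambda>(x,y). (x, y + b * x :: real)) = lborel \<Otimes>\<^sub>M lborel"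
  (is "distr ?L ?L ?T = ?L")
proof (rule measure_eqI)
  fix A assume "A \<in> sets (distr ?L ?L ?T)"
  then have A: "A \<in> sets ?L" by simp
  have Tm: "?T \<in> measurable ?L ?L" by measurable
  have A': "?T -` A \<inter> space ?L \<in> sets ?L" using Tm A by measurable
  have "emeasure (distr ?L ?L ?T) A = emeasure ?L (?T -` A \<inter> space ?L)"
    by (rule emeasure_distr[OF Tm A])
  also have "\<dots> = (\<integral>\<^sup>+x. emeasure lborel (Pair x -` (?T -` A \<inter> space ?L)) \<partial>lborel)"
    by (rule lborel.emeasure_pair_measure_alt[OF A'])
  also have "\<dots> = (\<integral>\<^sup>+x. emeasure lborel (Pair x -` A) \<partial>lborel)"
  proof (intro nn_integral_cong)
    fix x :: real
    have "Pair x -` (?T -` A \<inter> space ?L) = (\<lambda>y. b * x + y) -` (Pair x -` A)"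
      by (auto simp: space_pair_measure algebra_simps)
    then show "emeasure lborel (Pair x -` (?T -` A \<inter> space ?L)) = emeasure lborel (Pair x -` A)"
      using sets_Pair1[OF A] by (simp add: emeasure_lborel_translate)
  qed
  also have "\<dots> = emeasure ?L A"
    by (rule lborel.emeasure_pair_measure_alt[OF A, symmetric])
  finally show "emeasure (distr ?L ?L ?T) A = emeasure ?L A" .
qed simp

definition rotation :: "real \<Rightarrow> real \<Rightarrow> real \<times> real \<Rightarrow> real \<times> real" where
  "rotation c d = (\<lambda>(x,y). (c * x - d * y, d * x + c * y))"

lemma rotation_measurable[measurable]:
  "rotation c d \<in> measurable (lborel \<Otimes>\<^sub>M lborel) (lborel \<Otimes>\<^sub>M lborel)"
  unfolding rotation_def by measurable

text \<open>For \<open>d \<noteq> 0\<close> the rotation is a product of three shears, with \<open>a = (c - 1) / d\<close>.\<close>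

lemma distr_rotation_lborel_pair_nonzero:
  assumes cd: "c\<^sup>2 + d\<^sup>2 = 1" and d: "d \<noteq> 0"
  shows "distr (lborel \<Otimes>\<^sub>M lborel) (lborel \<Otimes>\<^sub>M lborel) (rotation c d) = lborel \<Otimes>\<^sub>M lborel"
proof -
  let ?L = "lborel \<Otimes>\<^sub>M lborel :: (real \<times> real) measure"
  define a where "a = (c - 1) / d"
  let ?S1 = "\<lambda>(x,y). (x + a * y, y :: real)"
  let ?S2 = "\<lambda>(x,y). (x, y + d * x :: real)"
  have S1m: "?S1 \<in> measurable ?L ?L" by measurable
  have S2m: "?S2 \<in> measurable ?L ?L" by measurable
  have eq: "rotation c d = ?S1 \<circ> ?S2 \<circ> ?S1"
  proof
    fix z :: "real \<times> real"
    obtain x y where z: "z = (x, y)" by (cases z)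
    have "c = 1 + a * d" using d unfolding a_def by simp
    moreover have "- d = a * (1 + c)"
    proof -
      have "a * (1 + c) = (c\<^sup>2 - 1) / d"
        using d unfolding a_def by (simp add: field_simps power2_eq_square)
      also have "\<dots> = - d" using cd d by (simp add: field_simps power2_eq_square)
      finally show ?thesis by simp
    qed
    ultimately have h1: "c = 1 + a * d" and h2: "d + a * (a * d) + 2 * a = 0"
      by (simp_all add: algebra_simps)
    have e: "y * (d + a * (a * d) + 2 * a) = 0" using h2 by simp
    show "rotation c d z = (?S1 \<circ> ?S2 \<circ> ?S1) z"
      unfolding z rotation_def using e by (simp add: h1 algebra_simps)
  qed
  have d1: "distr (distr ?L ?L ?S1) ?L ?S2 = distr ?L ?L (?S2 \<circ> ?S1)"
    by (rule distr_distr[OF S2m S1m])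
  have d2: "distr (distr ?L ?L (?S2 \<circ> ?S1)) ?L ?S1 = distr ?L ?L (?S1 \<circ> (?S2 \<circ> ?S1))"
    by (rule distr_distr[OF S1m measurable_comp[OF S1m S2m]])
  have "?L = distr (distr (distr ?L ?L ?S1) ?L ?S2) ?L ?S1"
    by (simp only: distr_shear_fst_lborel_pair distr_shear_snd_lborel_pair)
  also have "\<dots> = distr ?L ?L (?S1 \<circ> (?S2 \<circ> ?S1))" by (simp only: d1 d2)
  also have "?S1 \<circ> (?S2 \<circ> ?S1) = rotation c d" by (simp only: eq o_assoc)
  finally show ?thesis by simp
qed

lemma distr_rotation_lborel_pair:
  assumes cd: "c\<^sup>2 + d\<^sup>2 = 1"
  shows "distr (lborel \<Otimes>\<^sub>M lborel) (lborel \<Otimes>\<^sub>M lborel) (rotation c d) = lborel \<Otimes>\<^sub>M lborel"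
proof (cases "d = 0")
  case False then show ?thesis using distr_rotation_lborel_pair_nonzero[OF cd] by simp
next
  let ?L = "lborel \<Otimes>\<^sub>M lborel :: (real \<times> real) measure"
  case True
  then have "c = 1 \<or> c = -1" using cd by (simp add: power2_eq_1_iff)
  then show ?thesis
  proof
    assume "c = 1"
    then have "rotation c d = (\<lambda>z. z)" using True by (auto simp: rotation_def fun_eq_iff)
    then show ?thesis by (simp add: distr_id2)
  next
    assume "c = -1"
    then have "rotation c d = rotation 0 1 \<circ> rotation 0 1"
      using True by (auto simp: rotation_def fun_eq_iff)
    moreover have "distr ?L ?L (rotation 0 1 \<circ> rotation 0 1) = distr (distr ?L ?L (rotation 0 1)) ?L (rotation 0 1)"
      by (simp add: distr_distr)
    ultimately show ?thesis using distr_rotation_lborel_pair_nonzero[of 0 1] by simp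
  qed
qed

lemma distr_rotation_std_normal_pair:
  assumes cd: "c\<^sup>2 + d\<^sup>2 = 1"
  shows "distr (std_normal_distribution \<Otimes>\<^sub>M std_normal_distribution) (lborel \<Otimes>\<^sub>M lborel) (rotation c d)
       = std_normal_distribution \<Otimes>\<^sub>M std_normal_distribution"
proof -
  let ?L = "lborel \<Otimes>\<^sub>M lborel :: (real \<times> real) measure"
  define g where "g = (\<lambda>(x, y). ennreal (exp (- (x\<^sup>2 + y\<^sup>2) / 2) / (2 * pi)))"
  have [measurable]: "g \<in> borel_measurable ?L" unfolding g_def by measurable
  have g_rotation: "g (rotation c d z) = g z" for z
  proof (cases z)
    case (Pair x y)
    have "(c * x - d * y)\<^sup>2 + (d * x + c * y)\<^sup>2 = (c\<^sup>2 + d\<^sup>2) * (x\<^sup>2 + y\<^sup>2)"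
      by (simp add: power2_eq_square algebra_simps)
    then show ?thesis using cd by (simp add: Pair g_def rotation_def)
  qed
  have "density ?L g = density (distr ?L ?L (rotation c d)) g"
    by (simp add: distr_rotation_lborel_pair[OF cd])
  also have "\<dots> = distr (density ?L (\<lambda>z. g (rotation c d z))) ?L (rotation c d)"
    by (rule density_distr) measurable
  also have "(\<lambda>z. g (rotation c d z)) = g" by (simp add: g_rotation)
  finally show ?thesis unfolding std_normal_distribution_pair g_def[symmetric] by simp
qed

lemma (in prob_space) rotate_std_normal_pair:
  fixes R S :: "'a \<Rightarrow> real"
  assumes ind: "indep_var borel R borel S"
    and R: "distributed M lborel R std_normal_density"
    and S: "distributed M lborel S std_normal_density"
    and cd: "c\<^sup>2 + d\<^sup>2 = 1"
  shows "indep_var borel (\<lambda>\<omega>. c * R \<omega> - d * S \<omega>) borel (\<lambda>\<omega>. d * R \<omega> + c * S \<omega>)"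
    and "distributed M lborel (\<lambda>\<omega>. c * R \<omega> - d * S \<omega>) std_normal_density"
    and "distributed M lborel (\<lambda>\<omega>. d * R \<omega> + c * S \<omega>) std_normal_density"
proof -
  let ?N = std_normal_distribution
  let ?L = "lborel \<Otimes>\<^sub>M lborel :: (real \<times> real) measure"
  have [measurable]: "R \<in> borel_measurable M" "S \<in> borel_measurable M"
    using R S by (auto dest: distributed_measurable)
  have joint: "distr M ?L (\<lambda>\<omega>. (R \<omega>, S \<omega>)) = ?N \<Otimes>\<^sub>M ?N"
    using std_normal_pair_iff_joint_distr[of R S] ind R S by simp
  have "distr M ?L (rotation c d \<circ> (\<lambda>\<omega>. (R \<omega>, S \<omega>)))
      = distr (distr M ?L (\<lambda>\<omega>. (R \<omega>, S \<omega>))) ?L (rotation c d)"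
    by (rule distr_distr[symmetric]) measurable
  also have "\<dots> = ?N \<Otimes>\<^sub>M ?N"
    unfolding joint by (rule distr_rotation_std_normal_pair[OF cd])
  finally have "distr M ?L (rotation c d \<circ> (\<lambda>\<omega>. (R \<omega>, S \<omega>))) = ?N \<Otimes>\<^sub>M ?N" .
  moreover have "rotation c d \<circ> (\<lambda>\<omega>. (R \<omega>, S \<omega>)) = (\<lambda>\<omega>. (c * R \<omega> - d * S \<omega>, d * R \<omega> + c * S \<omega>))"
    by (auto simp: rotation_def)
  ultimately show "indep_var borel (\<lambda>\<omega>. c * R \<omega> - d * S \<omega>) borel (\<lambda>\<omega>. d * R \<omega> + c * S \<omega>)"
    and "distributed M lborel (\<lambda>\<omega>. c * R \<omega> - d * S \<omega>) std_normal_density"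
    and "distributed M lborel (\<lambda>\<omega>. d * R \<omega> + c * S \<omega>) std_normal_density"
    using std_normal_pair_iff_joint_distr[of "\<lambda>\<omega>. c * R \<omega> - d * S \<omega>" "\<lambda>\<omega>. d * R \<omega> + c * S \<omega>"]
    by auto
qed

lemma (in prob_space) indep_vars_rotate_pairs:
  fixes R S :: "'k \<Rightarrow> 'a \<Rightarrow> real"
  assumes fin: "finite K" and ne: "K \<noteq> {}"
    and indep: "indep_vars (\<lambda>_. borel) (\<lambda>(k, r) \<omega>. if r then R k \<omega> else S k \<omega>) (K \<times> UNIV)"
    and R: "\<And>k. k \<in> K \<Longrightarrow> distributed M lborel (R k) std_normal_density"
    and S: "\<And>k. k \<in> K \<Longrightarrow> distributed M lborel (S k) std_normal_density"
    and cd: "\<And>k. (c k)\<^sup>2 + (d k)\<^sup>2 = 1"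
  shows "indep_vars (\<lambda>_. borel)
           (\<lambda>(k, r) \<omega>. if r then c k * R k \<omega> - d k * S k \<omega> else d k * R k \<omega> + c k * S k \<omega>) (K \<times> UNIV)"
proof -
  define G where "G = (\<lambda>k \<omega>. (c k * R k \<omega> - d k * S k \<omega>, d k * R k \<omega> + c k * S k \<omega>))"
  define rotate_block where "rotate_block = (\<lambda>k (f :: 'k \<times> bool \<Rightarrow> real).
    (c k * f (k, True) - d k * f (k, False), d k * f (k, True) + c k * f (k, False)))"
  have "indep_vars (\<lambda>_. borel \<Otimes>\<^sub>M borel)
      (\<lambda>k \<omega>. rotate_block k (\<lambda>i\<in>{k} \<times> UNIV. if snd i then R (fst i) \<omega> else S (fst i) \<omega>)) K"
  proof (rule indep_vars_block_functions)
    show "indep_vars (\<lambda>_. borel) (\<lambda>i \<omega>. if snd i then R (fst i) \<omega> else S (fst i) \<omega>) (K \<times> UNIV)"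
      using indep by (simp add: case_prod_beta')
    fix k assume "k \<in> K"
    have [measurable]: "(\<lambda>f. f (k, b)) \<in> borel_measurable (PiM ({k} \<times> UNIV) (\<lambda>_. borel))" for b
      by (rule measurable_component_singleton) auto
    show "rotate_block k \<in> measurable (PiM ({k} \<times> UNIV) (\<lambda>_. borel)) (borel \<Otimes>\<^sub>M borel)"
      unfolding rotate_block_def by measurable
  qed (auto simp: disjoint_family_on_def)
  then have G: "indep_vars (\<lambda>_. borel \<Otimes>\<^sub>M borel) G K"
    unfolding G_def
    by (rule indep_vars_cong[THEN iffD1, rotated -1]) (auto simp: rotate_block_def fun_eq_iff)
  have "indep_vars (\<lambda>_. borel) (\<lambda>(k, r) \<omega>. if r then fst (G k \<omega>) else snd (G k \<omega>)) (K \<times> UNIV)"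
  proof (rule indep_vars_pair_components[OF fin ne G])
    fix k assume k: "k \<in> K"
    then have "indep_var borel (R k) borel (S k)"
      using indep_vars_indep_var[OF indep, of "(k, True)" "(k, False)"] by simp
    then show "indep_var borel (\<lambda>\<omega>. fst (G k \<omega>)) borel (\<lambda>\<omega>. snd (G k \<omega>))"
      using rotate_std_normal_pair(1) R[OF k] S[OF k] cd by (simp add: G_def)
  qed
  then show ?thesis unfolding G_def fst_conv snd_conv .
qed

section \<open>The law of \<open>b(j)\<^sup>2\<close>\<close>

lemma (in prob_space) std_normal_weighted_sum:
  fixes Y :: "'k \<Rightarrow> 'a \<Rightarrow> real"
  assumes fin: "finite K" and indep: "indep_vars (\<lambda>_. borel) Y K"
    and Y: "\<And>k. k \<in> K \<Longrightarrow> distributed M lborel (Y k) std_normal_density"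
    and w: "(\<Sum>k\<in>K. (w k)\<^sup>2) = 1"
  shows "distributed M lborel (\<lambda>\<omega>. \<Sum>k\<in>K. w k * Y k \<omega>) std_normal_density"
proof -
  define K' where "K' = {k \<in> K. w k \<noteq> 0}"
  have K': "finite K'" "K' \<subseteq> K" using fin by (auto simp: K'_def)
  have sum_K': "(\<Sum>k\<in>K'. f k) = (\<Sum>k\<in>K. f k)" if "\<And>k. k \<in> K \<Longrightarrow> w k = 0 \<Longrightarrow> f k = 0"
    for f :: "'k \<Rightarrow> real"
    by (rule sum.mono_neutral_left) (use fin that in \<open>auto simp: K'_def\<close>)
  have w': "(\<Sum>k\<in>K'. \<bar>w k\<bar>\<^sup>2) = 1" using sum_K'[of "\<lambda>k. (w k)\<^sup>2"] w by simp
  then have "K' \<noteq> {}" by auto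
  have "distributed M lborel (\<lambda>\<omega>. \<Sum>k\<in>K'. w k * Y k \<omega>)
      (normal_density (\<Sum>k\<in>K'. 0) (sqrt (\<Sum>k\<in>K'. \<bar>w k\<bar>\<^sup>2)))"
  proof (rule sum_indep_normal[OF K'(1) \<open>K' \<noteq> {}\<close>])
    show "indep_vars (\<lambda>_. borel) (\<lambda>k \<omega>. w k * Y k \<omega>) K'"
      by (rule indep_vars_compose2[OF indep_vars_subset[OF indep K'(2)], where Y = "\<lambda>k y. w k * y"])
        auto
    fix k assume k: "k \<in> K'"
    then show "0 < \<bar>w k\<bar>" by (simp add: K'_def)
    have "distributed M lborel (\<lambda>\<omega>. 0 + w k * Y k \<omega>) (normal_density (0 + w k * 0) (\<bar>w k\<bar> * 1))"
      by (rule normal_density_affine) (use k Y in \<open>auto simp: K'_def\<close>)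
    then show "distributed M lborel (\<lambda>\<omega>. w k * Y k \<omega>) (normal_density 0 \<bar>w k\<bar>)" by simp
  qed
  moreover have "(\<lambda>\<omega>. \<Sum>k\<in>K'. w k * Y k \<omega>) = (\<lambda>\<omega>. \<Sum>k\<in>K. w k * Y k \<omega>)"
    by (rule ext, rule sum_K') simp
  ultimately show ?thesis using w' by simp
qed

lemma (in prob_space) prob_weighted_sums_sq_le:
  fixes H :: "'k \<times> bool \<Rightarrow> 'a \<Rightarrow> real"
  assumes fin: "finite K" and indep: "indep_vars (\<lambda>_. borel) H (K \<times> UNIV)"
    and H: "\<And>k r. k \<in> K \<Longrightarrow> distributed M lborel (H (k, r)) std_normal_density"
    and w: "(\<Sum>k\<in>K. (w k)\<^sup>2) = 1" and t: "0 \<le> t"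
  shows "prob {\<omega> \<in> space M. (\<Sum>k\<in>K. w k * H (k, True) \<omega>)\<^sup>2 + (\<Sum>k\<in>K. w k * H (k, False) \<omega>)\<^sup>2 \<le> t}
           = 1 - exp (- t / 2)"
proof (rule prob_sum_sq_std_normal_le[OF _ _ _ t])
  have "indep_var (PiM (K \<times> {True}) (\<lambda>_. borel)) (\<lambda>\<omega>. \<lambda>i\<in>K \<times> {True}. H i \<omega>)
      (PiM (K \<times> {False}) (\<lambda>_. borel)) (\<lambda>\<omega>. \<lambda>i\<in>K \<times> {False}. H i \<omega>)"
    by (rule indep_var_restrict[OF indep]) auto
  then have "indep_var
      borel ((\<lambda>f. \<Sum>k\<in>K. w k * f (k, True)) \<circ> (\<lambda>\<omega>. \<lambda>i\<in>K \<times> {True}. H i \<omega>))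
      borel ((\<lambda>f. \<Sum>k\<in>K. w k * f (k, False)) \<circ> (\<lambda>\<omega>. \<lambda>i\<in>K \<times> {False}. H i \<omega>))"
    by (rule indep_var_compose)
      (intro borel_measurable_sum borel_measurable_times measurable_const
        measurable_component_singleton; auto)+
  then show "indep_var borel (\<lambda>\<omega>. \<Sum>k\<in>K. w k * H (k, True) \<omega>) borel (\<lambda>\<omega>. \<Sum>k\<in>K. w k * H (k, False) \<omega>)"
    by (simp add: o_def)
  have sums: "distributed M lborel (\<lambda>\<omega>. \<Sum>k\<in>K. w k * H (k, r) \<omega>) std_normal_density" for r
    by (rule std_normal_weighted_sum[OF fin indep_vars_reindex[OF indep] H w]) (auto simp: inj_on_def)
  show "distributed M lborel (\<lambda>\<omega>. \<Sum>k\<in>K. w k * H (k, True) \<omega>) std_normal_density"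
    by (rule sums)
  show "distributed M lborel (\<lambda>\<omega>. \<Sum>k\<in>K. w k * H (k, False) \<omega>) std_normal_density"
    by (rule sums)
qed

lemma cnj_mult_phase:
  fixes a x :: complex
  defines "v \<equiv> (if x = 0 then 1 else cnj x / complex_of_real (cmod x))"
  shows "cnj a * x = complex_of_real (cmod x) * cnj (a * v)"
    and "(Re v)\<^sup>2 + (Im v)\<^sup>2 = 1"
proof -
  show "cnj a * x = complex_of_real (cmod x) * cnj (a * v)"
  proof (cases "x = 0")
    case False
    then have "cmod x \<noteq> 0" by simp
    then show ?thesis using False unfolding v_def by (simp add: field_simps)
  qed (simp add: v_def)
  have "cmod v = 1"
  proof (cases "x = 0")
    case False
    then show ?thesis unfolding v_def by (simp add: norm_divide)
  qed (simp add: v_def)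
  then show "(Re v)\<^sup>2 + (Im v)\<^sup>2 = 1"
    using cmod_power2[of v] by simp
qed

lemma (in prob_space) prob_sq_norm_inner_std_normal_le:
  fixes a :: "nat \<Rightarrow> 'a \<Rightarrow> complex" and x0 :: "nat \<Rightarrow> complex"
  assumes indep:
      "indep_vars (\<lambda>_. borel) (\<lambda>(k, r) \<omega>. if r then Re (a k \<omega>) else Im (a k \<omega>)) ({..<n} \<times> UNIV)"
    and re: "\<And>k. k < n \<Longrightarrow> distributed M lborel (\<lambda>\<omega>. Re (a k \<omega>)) std_normal_density"
    and im: "\<And>k. k < n \<Longrightarrow> distributed M lborel (\<lambda>\<omega>. Im (a k \<omega>)) std_normal_density"
    and x0: "(\<Sum>k<n. (cmod (x0 k))\<^sup>2) = 1" and t: "0 \<le> t"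
  shows "prob {\<omega> \<in> space M. (cmod (\<Sum>k<n. cnj (a k \<omega>) * x0 k))\<^sup>2 \<le> t} = 1 - exp (- t / 2)"
proof -
  define v where "v = (\<lambda>k. if x0 k = 0 then 1 else cnj (x0 k) / complex_of_real (cmod (x0 k)))"
  define H where "H = (\<lambda>(k, r) \<omega>. if r then Re (a k \<omega> * v k) else Im (a k \<omega> * v k))"
  have H_rot: "H = (\<lambda>(k, r) \<omega>. if r then Re (v k) * Re (a k \<omega>) - Im (v k) * Im (a k \<omega>)
      else Im (v k) * Re (a k \<omega>) + Re (v k) * Im (a k \<omega>))"
    by (auto simp: H_def fun_eq_iff algebra_simps)
  have v: "(Re (v k))\<^sup>2 + (Im (v k))\<^sup>2 = 1" for k
    unfolding v_def by (rule cnj_mult_phase(2))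
  have "n \<noteq> 0" using x0 by (cases n) auto
  have indH: "indep_vars (\<lambda>_. borel) H ({..<n} \<times> UNIV)"
    unfolding H_rot by (rule indep_vars_rotate_pairs[OF _ _ indep re im v]) (use \<open>n \<noteq> 0\<close> in auto)
  have distH: "distributed M lborel (H (k, r)) std_normal_density" if "k < n" for k r
  proof -
    have "indep_var borel (\<lambda>\<omega>. Re (a k \<omega>)) borel (\<lambda>\<omega>. Im (a k \<omega>))"
      using indep_vars_indep_var[OF indep, of "(k, True)" "(k, False)"] that by simp
    from rotate_std_normal_pair(2,3)[OF this re[OF that] im[OF that] v[of k]]
    show ?thesis by (cases r) (simp_all add: H_rot)
  qed
  have "(cmod (\<Sum>k<n. cnj (a k \<omega>) * x0 k))\<^sup>2
      = (\<Sum>k<n. cmod (x0 k) * H (k, True) \<omega>)\<^sup>2 + (\<Sum>k<n. cmod (x0 k) * H (k, False) \<omega>)\<^sup>2" for \<omega>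
  proof -
    have "(\<Sum>k<n. cnj (a k \<omega>) * x0 k) = (\<Sum>k<n. complex_of_real (cmod (x0 k)) * cnj (a k \<omega> * v k))"
      unfolding v_def by (intro sum.cong refl cnj_mult_phase(1))
    also have "\<dots> = Complex (\<Sum>k<n. cmod (x0 k) * H (k, True) \<omega>)
        (- (\<Sum>k<n. cmod (x0 k) * H (k, False) \<omega>))"
      by (simp add: complex_eq_iff H_def Re_sum Im_sum sum_negf[symmetric] algebra_simps)
    finally show ?thesis by (simp add: cmod_power2)
  qed
  then show ?thesis
    using prob_weighted_sums_sq_le[OF _ indH distH x0 t] by simp
qed

lemma (in prob_space) prob_sq_bval_le:
  fixes A :: "nat \<Rightarrow> nat \<Rightarrow> 'a \<Rightarrow> complex" and x0 :: "nat \<Rightarrow> complex"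
  assumes indep: "indep_vars (\<lambda>_. borel) (\<lambda>(k, j, r) \<omega>. if r then Re (A k j \<omega>) else Im (A k j \<omega>))
      ({..<n} \<times> {..<N} \<times> UNIV)"
    and re: "\<And>k j. k < n \<Longrightarrow> j < N \<Longrightarrow> distributed M lborel (\<lambda>\<omega>. Re (A k j \<omega>)) std_normal_density"
    and im: "\<And>k j. k < n \<Longrightarrow> j < N \<Longrightarrow> distributed M lborel (\<lambda>\<omega>. Im (A k j \<omega>)) std_normal_density"
    and x0: "(\<Sum>k<n. (cmod (x0 k))\<^sup>2) = 1" and j: "j < N" and t: "0 \<le> t"
  shows "prob {\<omega> \<in> space M. (bval n A x0 j \<omega>)\<^sup>2 \<le> t} = 1 - exp (- t / 2)"
proof -
  define F where "F = (\<lambda>(k, j, r) \<omega>. if r then Re (A k j \<omega>) else Im (A k j \<omega>))"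
  have "indep_vars (\<lambda>_. borel) (\<lambda>i. F ((\<lambda>(k, r). (k, j, r)) i)) ({..<n} \<times> UNIV)"
    by (rule indep_vars_reindex[OF indep[folded F_def]]) (use j in \<open>auto simp: inj_on_def\<close>)
  then have "indep_vars (\<lambda>_. borel)
      (\<lambda>(k, r) \<omega>. if r then Re (A k j \<omega>) else Im (A k j \<omega>)) ({..<n} \<times> UNIV)"
    by (rule indep_vars_cong[THEN iffD1, rotated -1]) (auto simp: F_def)
  from prob_sq_norm_inner_std_normal_le[OF this re im x0 t] j
  show ?thesis by (simp add: bval_def)
qed

lemma (in prob_space) indep_vars_sq_bval:
  fixes A :: "nat \<Rightarrow> nat \<Rightarrow> 'a \<Rightarrow> complex" and x0 :: "nat \<Rightarrow> complex"
  assumes indep: "indep_vars (\<lambda>_. borel) (\<lambda>(k, j, r) \<omega>. if r then Re (A k j \<omega>) else Im (A k j \<omega>))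
      ({..<n} \<times> {..<N} \<times> UNIV)"
  shows "indep_vars (\<lambda>_. borel) (\<lambda>j \<omega>. (bval n A x0 j \<omega>)\<^sup>2) {..<N}"
proof -
  define F where "F = (\<lambda>(k, j, r) \<omega>. if r then Re (A k j \<omega>) else Im (A k j \<omega>))"
  define g where
    "g = (\<lambda>(j :: nat) f. (cmod (\<Sum>k<n. cnj (Complex (f (k, j, True)) (f (k, j, False))) * x0 k))\<^sup>2)"
  have "indep_vars (\<lambda>_. borel) (\<lambda>j \<omega>. g j (\<lambda>i\<in>{..<n} \<times> {j} \<times> UNIV. F i \<omega>)) {..<N}"
  proof (rule indep_vars_block_functions[OF indep[folded F_def]])
    show "g j \<in> borel_measurable (PiM ({..<n} \<times> {j} \<times> UNIV) (\<lambda>_. borel))" for j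
      \<comment> \<open>the measurability prover knows neither \<open>Complex\<close> nor \<open>cnj\<close>\<close>
      unfolding g_def Complex_eq complex_cnj_add complex_cnj_mult complex_cnj_complex_of_real complex_cnj_i
      by measurable
  qed (auto simp: disjoint_family_on_def)
  then show ?thesis
    by (rule indep_vars_cong[THEN iffD1, rotated -1]) (auto simp: bval_def g_def F_def fun_eq_iff)
qed

section \<open>Tail bounds for the order statistics of exponential variables\<close>

lemma tau_star_nonneg: "m < N \<Longrightarrow> 0 \<le> tau_star m N"
  by (simp add: tau_star_def)

lemma exp_neg_half_tau_star:
  assumes "m < N"
  shows "exp (- tau_star m N / 2) = 1 - real m / real N"
proof -
  have "real m / real N < 1" using assms by (simp add: divide_less_eq)
  then show ?thesis by (simp add: tau_star_def)
qed

lemma sq_mult_exp_neg_le: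
  fixes \<delta> :: real
  assumes "0 \<le> \<delta>"
  shows "\<delta>\<^sup>2 * exp (- \<delta>) \<le> 4 * (1 - exp (- \<delta> / 2))\<^sup>2"
proof -
  have "(1 + \<delta> / 2) * exp (- \<delta> / 2) \<le> exp (\<delta> / 2) * exp (- \<delta> / 2)"
    by (intro mult_right_mono exp_ge_add_one_self) simp
  then have le: "\<delta> / 2 * exp (- \<delta> / 2) \<le> 1 - exp (- \<delta> / 2)"
    by (simp add: algebra_simps flip: exp_add)
  have "\<delta>\<^sup>2 * exp (- \<delta>) = (\<delta> * exp (- \<delta> / 2))\<^sup>2"
    by (simp add: power_mult_distrib power2_eq_square flip: exp_add)
  also have "\<dots> \<le> (2 * (1 - exp (- \<delta> / 2)))\<^sup>2"
    using assms le by (intro power_mono) auto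
  also have "\<dots> = 4 * (1 - exp (- \<delta> / 2))\<^sup>2"
    by (simp add: power2_eq_square algebra_simps)
  finally show ?thesis .
qed

lemma mult_one_minus_le_quarter: "r * (1 - r) \<le> (1 / 4 :: real)"
  using zero_le_power2[of "r - 1 / 2"] by (simp add: power2_eq_square algebra_simps)

lemma bernoulli_variance_bound:
  fixes \<rho> :: real
  assumes \<rho>: "0 < \<rho>" "\<rho> < 1"
  obtains V where "0 < V" and "\<And>r. 0 \<le> r \<Longrightarrow> r \<le> \<rho> \<Longrightarrow> r * (1 - r) \<le> V"
    and "8 * V * (1 - \<rho>)\<^sup>2 \<le> 1"
proof (cases "\<rho> \<le> 1 / 2")
  case True
  show ?thesis
  proof (rule that[of "\<rho> * (1 - \<rho>)"])
    show "0 < \<rho> * (1 - \<rho>)" using \<rho> by simp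
    show "r * (1 - r) \<le> \<rho> * (1 - \<rho>)" if "0 \<le> r" "r \<le> \<rho>" for r
    proof -
      have "0 \<le> (\<rho> - r) * (1 - \<rho> - r)" using that True by (intro mult_nonneg_nonneg) auto
      then show ?thesis by (simp add: algebra_simps)
    qed
    have "1 - 8 * (\<rho> * (1 - \<rho>)) * (1 - \<rho>)\<^sup>2 = 8 * (\<rho>\<^sup>2 - 3 * \<rho> / 2 + 1 / 4)\<^sup>2 + 2 * (\<rho> - 1 / 2)\<^sup>2"
      by (simp add: power2_eq_square algebra_simps)
    moreover have "0 \<le> 8 * (\<rho>\<^sup>2 - 3 * \<rho> / 2 + 1 / 4)\<^sup>2 + 2 * (\<rho> - 1 / 2)\<^sup>2" by simp
    ultimately show "8 * (\<rho> * (1 - \<rho>)) * (1 - \<rho>)\<^sup>2 \<le> 1" by linarith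
  qed
next
  case False
  show ?thesis
  proof (rule that[of "1 / 4"])
    show "r * (1 - r) \<le> 1 / 4" for r :: real
      by (rule mult_one_minus_le_quarter)
    have "(1 - \<rho>)\<^sup>2 \<le> (1 / 2)\<^sup>2" using False \<rho> by (intro power_mono) auto
    then show "8 * (1 / 4) * (1 - \<rho>)\<^sup>2 \<le> (1 :: real)" by (simp add: power_divide)
  qed simp
qed

lemma (in prob_space) prob_ord_stat_le_tau_star:
  fixes Z :: "nat \<Rightarrow> 'a \<Rightarrow> real"
  assumes indep: "indep_vars (\<lambda>_. borel) Z {..<N}"
    and law: "\<And>j t. j < N \<Longrightarrow> 0 \<le> t \<Longrightarrow> prob {\<omega> \<in> space M. Z j \<omega> \<le> t} = 1 - exp (- t / 2)"
    and m: "1 \<le> m" "m < N" and \<delta>: "0 < \<delta>"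
  shows "prob {\<omega> \<in> space M. ord_stat (map (\<lambda>j. Z j \<omega>) [0..<N]) m \<le> tau_star m N + \<delta>}
           \<ge> 1 - exp (- (real N / 2) * \<delta>\<^sup>2 * exp (- \<delta>) * \<bar>1 - real m / real N\<bar>\<^sup>2)"
proof -
  define \<rho> where "\<rho> = real m / real N"
  define c where "c = tau_star m N + \<delta>"
  define g where "g = (1 - \<rho>) * (1 - exp (- \<delta> / 2))"
  \<comment> \<open>the Chernoff parameter \<open>l = 4 g\<close> used below is optimal for \<open>V = 1/4\<close>\<close>
  have \<rho>: "0 \<le> \<rho>" "\<rho> < 1" and m_eq: "real m = real N * \<rho>"
    using m by (auto simp: \<rho>_def divide_less_eq)
  have g: "0 < g" "g \<le> 1 - \<rho>"
    using \<rho> \<delta> by (auto simp: g_def mult_left_le)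
  have "0 \<le> c" using tau_star_nonneg[OF m(2)] \<delta> by (simp add: c_def)
  have "exp (- c / 2) = exp (- tau_star m N / 2) * exp (- \<delta> / 2)"
    by (simp add: c_def add_divide_distrib flip: exp_add)
  also have "\<dots> = (1 - \<rho>) * exp (- \<delta> / 2)"
    by (simp only: exp_neg_half_tau_star[OF m(2)] \<rho>_def)
  finally have pc: "prob {\<omega> \<in> space M. Z j \<omega> \<le> c} = \<rho> + g" if "j < N" for j
    using law[OF that \<open>0 \<le> c\<close>] by (simp add: g_def algebra_simps)
  have "4 * g * real m + real N * (- (\<rho> + g) * (4 * g) + 1 / 4 * (4 * g)\<^sup>2 / 2) = - 2 * real N * g\<^sup>2"
    unfolding m_eq by (simp add: power2_eq_square algebra_simps)
  moreover have "prob {\<omega> \<in> space M. real m \<le> real (card {j \<in> {..<N}. Z j \<omega> \<le> c})}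
      \<ge> 1 - exp (4 * g * real m + real (card {..<N}) * (- (\<rho> + g) * (4 * g) + 1 / 4 * (4 * g)\<^sup>2 / 2))"
  proof (rule prob_count_ge[OF _ indep])
    show "r * (1 - r) \<le> 1 / 4" for r :: real
      by (rule mult_one_minus_le_quarter)
  qed (use pc \<rho> g in auto)
  ultimately have count: "prob {\<omega> \<in> space M. real m \<le> real (card {j \<in> {..<N}. Z j \<omega> \<le> c})}
      \<ge> 1 - exp (- 2 * real N * g\<^sup>2)"
    by simp
  have "real N / 2 * (\<delta>\<^sup>2 * exp (- \<delta>)) * (1 - \<rho>)\<^sup>2
      \<le> real N / 2 * (4 * (1 - exp (- \<delta> / 2))\<^sup>2) * (1 - \<rho>)\<^sup>2"
    using sq_mult_exp_neg_le \<delta> by (intro mult_right_mono mult_left_mono) auto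
  then have "1 - exp (- (real N / 2) * \<delta>\<^sup>2 * exp (- \<delta>) * \<bar>1 - \<rho>\<bar>\<^sup>2) \<le> 1 - exp (- 2 * real N * g\<^sup>2)"
    by (simp add: g_def power_mult_distrib mult_ac)
  also have "\<dots> \<le> prob {\<omega> \<in> space M. real m \<le> real (card {j \<in> {..<N}. Z j \<omega> \<le> c})}"
    by (fact count)
  also have "{\<omega> \<in> space M. real m \<le> real (card {j \<in> {..<N}. Z j \<omega> \<le> c})}
      = {\<omega> \<in> space M. ord_stat (map (\<lambda>j. Z j \<omega>) [0..<N]) m \<le> c}"
    using ord_stat_le_iff[of m N] m by auto
  finally show ?thesis by (simp add: c_def \<rho>_def)
qed

lemma (in prob_space) prob_card_le_tau_star_ge:
  fixes Z :: "nat \<Rightarrow> 'a \<Rightarrow> real"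
  assumes indep: "indep_vars (\<lambda>_. borel) Z {..<N}"
    and law: "\<And>j t. j < N \<Longrightarrow> 0 \<le> t \<Longrightarrow> prob {\<omega> \<in> space M. Z j \<omega> \<le> t} = 1 - exp (- t / 2)"
    and m: "m < N" and \<epsilon>: "0 < \<epsilon>"
  shows "prob {\<omega> \<in> space M. real (card {j \<in> {..<N}. Z j \<omega> \<le> tau_star m N}) \<ge> real m * (1 - \<epsilon>)}
           \<ge> 1 - 2 * exp (- 4 * \<epsilon>\<^sup>2 * \<bar>1 - real m / real N\<bar>\<^sup>2 * (real m)\<^sup>2 / real N)"
proof (cases "m = 0 \<or> 1 \<le> \<epsilon>")
  case True
  then have "real m * (1 - \<epsilon>) \<le> 0" by (auto simp: mult_nonneg_nonpos)
  then have "{\<omega> \<in> space M. real (card {j \<in> {..<N}. Z j \<omega> \<le> tau_star m N}) \<ge> real m * (1 - \<epsilon>)} = space M"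
    by (auto intro: order_trans)
  then show ?thesis by (simp add: prob_space)
next
  case False
  define \<rho> where "\<rho> = real m / real N"
  have \<rho>: "0 < \<rho>" "\<rho> < 1" and m_eq: "real m = real N * \<rho>"
    using m False by (auto simp: \<rho>_def divide_less_eq)
  obtain V where V: "0 < V" "\<And>r. 0 \<le> r \<Longrightarrow> r \<le> \<rho> \<Longrightarrow> r * (1 - r) \<le> V" "8 * V * (1 - \<rho>)\<^sup>2 \<le> 1"
    using bernoulli_variance_bound[OF \<rho>] by blast
  define l where "l = \<epsilon> * \<rho> / V" \<comment> \<open>the minimiser of the Chernoff exponent\<close>
  have "0 < l" using \<epsilon> \<rho> V by (simp add: l_def)
  have "prob {\<omega> \<in> space M. real m * (1 - \<epsilon>) \<le> real (card {j \<in> {..<N}. Z j \<omega> \<le> tau_star m N})}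
      \<ge> 1 - exp (l * (real m * (1 - \<epsilon>)) + real (card {..<N}) * (- \<rho> * l + V * l\<^sup>2 / 2))"
    by (rule prob_count_ge[OF _ indep _ _ _ V(2)])
      (use law[OF _ tau_star_nonneg[OF m]] exp_neg_half_tau_star[OF m] \<rho> \<open>0 < l\<close>
        in \<open>auto simp: \<rho>_def\<close>)
  moreover have "l * (real m * (1 - \<epsilon>)) + real N * (- \<rho> * l + V * l\<^sup>2 / 2)
      = - (real N * \<epsilon>\<^sup>2 * \<rho>\<^sup>2 / (2 * V))"
    unfolding m_eq l_def using V(1) by (simp add: power2_eq_square field_simps)
  moreover have "4 * \<epsilon>\<^sup>2 * \<bar>1 - \<rho>\<bar>\<^sup>2 * (real m)\<^sup>2 / real N \<le> real N * \<epsilon>\<^sup>2 * \<rho>\<^sup>2 / (2 * V)"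
  proof -
    have "4 * \<epsilon>\<^sup>2 * \<bar>1 - \<rho>\<bar>\<^sup>2 * (real m)\<^sup>2 / real N
        = real N * \<epsilon>\<^sup>2 * \<rho>\<^sup>2 / (2 * V) * (8 * V * (1 - \<rho>)\<^sup>2)"
      unfolding m_eq using V(1) m by (simp add: power2_eq_square field_simps)
    also have "\<dots> \<le> real N * \<epsilon>\<^sup>2 * \<rho>\<^sup>2 / (2 * V)"
      using V by (intro mult_left_le) auto
    finally show ?thesis .
  qed
  ultimately show ?thesis
    by (simp add: \<rho>_def[symmetric]) (smt (verit) exp_le_cancel_iff exp_gt_zero)
qed

theorem proposition4:
  fixes M :: "'a measure" and n N m :: nat
    and A :: "nat \<Rightarrow> nat \<Rightarrow> 'a \<Rightarrow> complex"
    and x0 :: "nat \<Rightarrow> complex"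
    and I :: "'a \<Rightarrow> nat set"
  assumes "prob_space M"
    and indep: "prob_space.indep_vars M (\<lambda>_. borel)
          (\<lambda>(k, j, r) \<omega>. if r then Re (A k j \<omega>) else Im (A k j \<omega>))
          ({..<n} \<times> {..<N} \<times> (UNIV :: bool set))"
    and re_gauss: "\<And>k j. k < n \<Longrightarrow> j < N \<Longrightarrow> distributed M lborel (\<lambda>\<omega>. Re (A k j \<omega>)) std_normal_density"
    and im_gauss: "\<And>k j. k < n \<Longrightarrow> j < N \<Longrightarrow> distributed M lborel (\<lambda>\<omega>. Im (A k j \<omega>)) std_normal_density"
    and x0_norm: "(\<Sum>k<n. (cmod (x0 k))\<^sup>2) = 1"
    and I_sub: "\<And>\<omega>. \<omega> \<in> space M \<Longrightarrow> I \<omega> \<subseteq> {..<N}"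
    and I_card: "\<And>\<omega>. \<omega> \<in> space M \<Longrightarrow> card (I \<omega>) = m"
    and I_small: "\<And>\<omega> i j. \<omega> \<in> space M \<Longrightarrow> i \<in> I \<omega> \<Longrightarrow> j \<in> {..<N} - I \<omega> \<Longrightarrow>
                    bval n A x0 i \<omega> \<le> bval n A x0 j \<omega>"
    and m_lt: "m < N"
  shows "(\<forall>\<delta>>0. 1 \<le> m \<longrightarrow>
            measure M {\<omega> \<in> space M. tau n N A x0 m \<omega> \<le> tau_star m N + \<delta>}
              \<ge> 1 - exp (- (real N / 2) * \<delta>\<^sup>2 * exp (- \<delta>) * \<bar>1 - real m / real N\<bar>\<^sup>2))
       \<and> (\<forall>\<epsilon>>0.
            measure M {\<omega> \<in> space M. real (card (Ihat n N m A x0 \<omega>)) \<ge> real m * (1 - \<epsilon>)}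
              \<ge> 1 - 2 * exp (- 4 * \<epsilon>\<^sup>2 * \<bar>1 - real m / real N\<bar>\<^sup>2 * (real m)\<^sup>2 / real N))"
proof -
  interpret prob_space M by fact
  have indZ: "indep_vars (\<lambda>_. borel) (\<lambda>j \<omega>. (bval n A x0 j \<omega>)\<^sup>2) {..<N}"
    by (rule indep_vars_sq_bval[OF indep])
  have law: "\<And>j t. j < N \<Longrightarrow> 0 \<le> t \<Longrightarrow>
      prob {\<omega> \<in> space M. (bval n A x0 j \<omega>)\<^sup>2 \<le> t} = 1 - exp (- t / 2)"
    by (rule prob_sq_bval_le[OF indep re_gauss im_gauss x0_norm])
  show ?thesis
    using prob_ord_stat_le_tau_star[OF indZ law] prob_card_le_tau_star_ge[OF indZ law m_lt]
    by (simp add: tau_def Ihat_def m_lt)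
qed

end
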